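(* Let $H$ be a real symmetric positive definite $d\times d$ matrix and $L$ a real $d\times d$ matrix with $L^TH+HL=0$. Consider an $s$-stage explicit Runge–Kutta method applied to $\frac{d}{dt}u=Lu$, $u_{n+1}=G_s u_n$ with $G_s=\sum_{k=0}^s a_k(hL)^k$, $a_0=1$, $a_s\ne0$, $h>0$. Suppose (i) $b_k=0$ for $1\le k\le s-2$, (ii) $b_{s-1}<0$, and (iii) $h\|L\|\le\sqrt{-b_{s-1}/b_s}$. Then the method is strongly stable, i.e. $\|u_{n+1}\|_H\le\|u_n\|_H$ for every $u_n$.
   Context: For $0\le k\le s$, $b_k=\sum_{i=\max(0,2k-s)}^{\min(2k,s)}(-1)^{k+i}a_i a_{2k-i}$ (in particular $b_s=a_s^2$). Here $\|x\|_H=\sqrt{\langle x,Hx\rangle}$ and $\|L\|=\sup_{\|v\|_H=1}\|Lv\|_H$. *)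

theory Defs
  imports "HOL-Analysis.Analysis"
begin

fun matpow :: "real^'n^'n \<Rightarrow> nat \<Rightarrow> real^'n^'n" where
  "matpow A 0 = mat 1"
| "matpow A (Suc k) = A ** matpow A k"

definition Hnorm :: "real^'n^'n \<Rightarrow> real^'n \<Rightarrow> real" where
  "Hnorm H x = sqrt (x \<bullet> (H *v x))"

definition Hopnorm :: "real^'n^'n \<Rightarrow> real^'n^'n \<Rightarrow> real" where
  "Hopnorm H L = Sup {Hnorm H (L *v v) | v. Hnorm H v = 1}"

definition spd :: "real^'n^'n \<Rightarrow> bool" where
  "spd H \<longleftrightarrow> transpose H = H \<and> (\<forall>x. x \<noteq> 0 \<longrightarrow> x \<bullet> (H *v x) > 0)"

definition RKmat :: "(nat \<Rightarrow> real) \<Rightarrow> nat \<Rightarrow> real \<Rightarrow> real^'n^'n \<Rightarrow> real^'n^'n" where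
  "RKmat a s h L = (\<Sum>k=0..s. a k *\<^sub>R matpow (h *\<^sub>R L) k)"

text \<open>b_k = sum_{i=max(0,2k-s)}^{min(2k,s)} (-1)^(k+i) a_i a_(2k-i); nat subtraction 2k-s
  realises max(0,2k-s).\<close>
definition bcoef :: "(nat \<Rightarrow> real) \<Rightarrow> nat \<Rightarrow> nat \<Rightarrow> real" where
  "bcoef a s k = (\<Sum>i=2*k-s..min (2*k) s. (-1)^(k+i) * a i * a (2*k-i))"

end

theory Submission
  imports Defs
begin

(* Write M = hL. Skew-adjointness of L with respect to H gives
   <M^i u, M^j u>_H = (-1)^i <u, M^(i+j) u>_H, which vanishes for odd i + j and equals
   (-1)^(i+k) ||M^k u||_H^2 for i + j = 2k. Expanding ||G_s u||_H^2 therefore yields the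
   energy identity ||G_s u||_H^2 = sum_k b_k ||M^k u||_H^2. Under (i) only the terms k = 0,
   s-1, s survive, b_0 = a_0^2 = 1, and ||M^s u||_H <= h ||L|| ||M^(s-1) u||_H together with
   (iii) makes b_s ||M^s u||_H^2 cancel against b_(s-1) ||M^(s-1) u||_H^2 <= 0. *)

lemma matrix_vector_mult_sum_left:
  "finite A \<Longrightarrow> (\<Sum>k\<in>A. f k) *v (x::real^'n) = (\<Sum>k\<in>A. f k *v x)"
  by (induct rule: finite_induct) (auto simp: matrix_vector_mult_add_rdistrib)

lemma matrix_vector_mult_uminus_left: "(- A) *v (x::real^'n) = - (A *v x)"
  by (simp add: vec_eq_iff matrix_vector_mult_def sum_negf)

lemma matpow_Suc_mult_vector: "matpow A (Suc k) *v x = A *v (matpow A k *v x)"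
  by (simp add: matrix_vector_mul_assoc)

lemma sum_atLeast0_atMost_sparse:
  fixes f :: "nat \<Rightarrow> 'a::comm_monoid_add"
  assumes "2 \<le> s" and "\<And>k. 1 \<le> k \<Longrightarrow> k \<le> s - 2 \<Longrightarrow> f k = 0"
  shows "(\<Sum>k=0..s. f k) = f 0 + f (s - 1) + f s"
proof -
  obtain t where s: "s = Suc (Suc t)"
    using assms(1) by (metis add_2_eq_Suc le_Suc_ex)
  have "(\<Sum>k=Suc 0..t. f k) = 0"
    using assms(2) by (intro sum.neutral) (auto simp: s)
  then have "(\<Sum>k=0..t. f k) = f 0"
    by (simp add: sum.atLeast_Suc_atMost)
  then show ?thesis
    by (simp add: s)
qed

subsection \<open>The energy norm and its operator norm\<close>

lemma spd_quadratic_form_nonneg: "spd H \<Longrightarrow> 0 \<le> x \<bullet> (H *v x)"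
  unfolding spd_def by (cases "x = 0") (auto intro: less_imp_le)

lemma Hnorm_squared: "spd H \<Longrightarrow> (Hnorm H x)\<^sup>2 = x \<bullet> (H *v x)"
  by (simp add: Hnorm_def spd_quadratic_form_nonneg)

lemma Hnorm_nonneg: "spd H \<Longrightarrow> 0 \<le> Hnorm H x"
  by (simp add: Hnorm_def spd_quadratic_form_nonneg)

lemma Hnorm_pos: "spd H \<Longrightarrow> x \<noteq> 0 \<Longrightarrow> 0 < Hnorm H x"
  by (simp add: Hnorm_def spd_def)

lemma Hnorm_zero [simp]: "Hnorm H 0 = 0"
  by (simp add: Hnorm_def)

lemma Hnorm_scaleR: "Hnorm H (c *\<^sub>R x) = \<bar>c\<bar> * Hnorm H x"
  by (simp add: Hnorm_def matrix_vector_mult_scaleR real_sqrt_mult mult.assoc[symmetric]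
      flip: power2_eq_square)

lemma spd_coercive:
  fixes H :: "real^'n^'n"
  assumes "spd H"
  obtains m where "0 < m" and "\<And>x. m * (norm x)\<^sup>2 \<le> x \<bullet> (H *v x)"
proof -
  have cont: "continuous_on (sphere 0 1) (\<lambda>x::real^'n. x \<bullet> (H *v x))"
    by (intro continuous_intros
        matrix_vector_mult_linear_continuous_on[THEN continuous_on_compose2[of UNIV]]) auto
  obtain x0 where x0: "x0 \<in> sphere 0 1" "\<And>y. y \<in> sphere 0 1 \<Longrightarrow> x0 \<bullet> (H *v x0) \<le> y \<bullet> (H *v y)"
    using continuous_attains_inf[OF compact_sphere _ cont] by (fastforce simp: sphere_eq_empty)
  define m where "m = x0 \<bullet> (H *v x0)"
  have "x0 \<noteq> 0"
    using x0(1) by auto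
  then have "0 < m"
    using assms unfolding spd_def m_def by auto
  moreover have "m * (norm x)\<^sup>2 \<le> x \<bullet> (H *v x)" for x
  proof (cases "x = 0")
    case False
    define y where "y = (1 / norm x) *\<^sub>R x"
    have "m \<le> y \<bullet> (H *v y)"
      using False x0(2)[of y] by (simp add: m_def y_def)
    also have "y \<bullet> (H *v y) = (x \<bullet> (H *v x)) / (norm x)\<^sup>2"
      by (simp add: y_def matrix_vector_mult_scaleR power2_eq_square)
    finally show ?thesis
      using False by (simp add: field_simps)
  qed simp
  ultimately show ?thesis
    using that by blast
qed

lemma quadratic_form_bounded:
  fixes H :: "real^'n^'n"
  obtains B where "0 < B" and "\<And>x. x \<bullet> (H *v x) \<le> B * (norm x)\<^sup>2"
proof -
  obtain B where B: "0 < B" "\<And>x. norm (H *v x) \<le> norm x * B"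
    using bounded_linear.pos_bounded[OF matrix_vector_mul_bounded_linear] by blast
  have "x \<bullet> (H *v x) \<le> B * (norm x)\<^sup>2" for x
  proof -
    have "x \<bullet> (H *v x) \<le> norm x * norm (H *v x)"
      by (rule norm_cauchy_schwarz)
    also have "\<dots> \<le> norm x * (norm x * B)"
      by (intro mult_left_mono B(2)) simp
    finally show ?thesis
      by (simp add: power2_eq_square mult_ac)
  qed
  then show ?thesis
    using B(1) that by blast
qed

lemma bdd_above_Hopnorm_set:
  fixes H L :: "real^'n^'n"
  assumes "spd H"
  shows "bdd_above {Hnorm H (L *v v) | v. Hnorm H v = 1}"
proof -
  obtain m where m: "0 < m" "\<And>x. m * (norm x)\<^sup>2 \<le> x \<bullet> (H *v x)"
    using spd_coercive[OF assms] by blast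
  obtain B where B: "0 < B" "\<And>x. x \<bullet> (H *v x) \<le> B * (norm x)\<^sup>2"
    using quadratic_form_bounded by blast
  obtain C where C: "\<And>x. norm (L *v x) \<le> norm x * C"
    using bounded_linear.bounded[OF matrix_vector_mul_bounded_linear] by blast
  have "Hnorm H (L *v v) \<le> sqrt (B * C\<^sup>2 / m)" if v: "Hnorm H v = 1" for v
  proof -
    have "m * (norm v)\<^sup>2 \<le> 1"
      using m(2)[of v] v Hnorm_squared[OF assms, of v] by simp
    have "(Hnorm H (L *v v))\<^sup>2 \<le> B * (norm (L *v v))\<^sup>2"
      using B(2) Hnorm_squared[OF assms] by simp
    also have "\<dots> \<le> B * (norm v * C)\<^sup>2"
      using C[of v] B(1) by (intro mult_left_mono power_mono) auto
    also have "\<dots> = B * C\<^sup>2 / m * (m * (norm v)\<^sup>2)"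
      using m(1) by (simp add: power_mult_distrib)
    also have "\<dots> \<le> B * C\<^sup>2 / m"
      using \<open>m * (norm v)\<^sup>2 \<le> 1\<close> m(1) B(1) by (intro mult_left_le) auto
    finally show ?thesis
      by (rule real_le_rsqrt)
  qed
  then show ?thesis
    by (intro bdd_aboveI) blast
qed

lemma Hnorm_mult_le_Hopnorm:
  fixes H L :: "real^'n^'n"
  assumes "spd H"
  shows "Hnorm H (L *v x) \<le> Hopnorm H L * Hnorm H x"
proof (cases "x = 0")
  case False
  define c where "c = Hnorm H x"
  have "0 < c"
    using Hnorm_pos[OF assms False] by (simp add: c_def)
  then have "Hnorm H ((1 / c) *\<^sub>R x) = 1"
    by (simp add: Hnorm_scaleR c_def)
  then have "Hnorm H (L *v ((1 / c) *\<^sub>R x)) \<in> {Hnorm H (L *v v) | v. Hnorm H v = 1}"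
    by blast
  then have "Hnorm H (L *v ((1 / c) *\<^sub>R x)) \<le> Hopnorm H L"
    unfolding Hopnorm_def by (rule cSup_upper[OF _ bdd_above_Hopnorm_set[OF assms]])
  then show ?thesis
    using \<open>0 < c\<close> by (simp add: matrix_vector_mult_scaleR Hnorm_scaleR field_simps c_def)
qed (simp add: matrix_vector_mult_0_right)

lemma Hopnorm_nonneg:
  fixes H L :: "real^'n^'n"
  assumes "spd H"
  shows "0 \<le> Hopnorm H L"
proof -
  obtain x :: "real^'n" where "x \<noteq> 0"
    using vec_eq_iff[of "vec 1 :: real^'n" 0] by auto
  have "0 \<le> Hopnorm H L * Hnorm H x"
    using Hnorm_nonneg[OF assms] Hnorm_mult_le_Hopnorm[OF assms] order_trans by blast
  then show ?thesis
    using Hnorm_pos[OF assms \<open>x \<noteq> 0\<close>] by (simp add: zero_le_mult_iff)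
qed

subsection \<open>Skew-adjoint matrices\<close>

lemma inner_symmetric_matrix:
  fixes H :: "real^'n^'n"
  assumes "transpose H = H"
  shows "x \<bullet> (H *v y) = y \<bullet> (H *v x)"
  by (metis assms dot_lmul_matrix inner_commute transpose_matrix_vector)

lemma skew_adjoint_inner:
  fixes H M :: "real^'n^'n"
  assumes "transpose M ** H + H ** M = 0"
  shows "(M *v x) \<bullet> (H *v y) = - (x \<bullet> (H *v (M *v y)))"
proof -
  have "transpose M ** H = - (H ** M)"
    using assms by (simp add: eq_neg_iff_add_eq_0)
  have "(M *v x) \<bullet> (H *v y) = (transpose M *v (H *v y)) \<bullet> x"
    by (metis dot_lmul_matrix inner_commute transpose_matrix_vector)
  also have "\<dots> = - ((H *v (M *v y)) \<bullet> x)"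
    by (simp add: matrix_vector_mul_assoc \<open>transpose M ** H = - (H ** M)\<close>
        matrix_vector_mult_uminus_left)
  finally show ?thesis
    by (simp add: inner_commute)
qed

lemma skew_adjoint_scaleR:
  fixes H M :: "real^'n^'n"
  assumes "transpose M ** H + H ** M = 0"
  shows "transpose (c *\<^sub>R M) ** H + H ** (c *\<^sub>R M) = 0"
  using arg_cong[OF assms, of "scaleR c"]
  by (simp add: transpose_scalar matrix_scalar_ac scaleR_right_distrib flip: scalar_matrix_assoc)

lemma skew_adjoint_matpow_inner:
  fixes H M :: "real^'n^'n"
  assumes "transpose M ** H + H ** M = 0"
  shows "(matpow M i *v x) \<bullet> (H *v (matpow M j *v y))
    = (-1) ^ i * (x \<bullet> (H *v (matpow M (i + j) *v y)))"
proof (induction i arbitrary: j)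
  case (Suc i)
  have "(matpow M (Suc i) *v x) \<bullet> (H *v (matpow M j *v y))
      = - ((matpow M i *v x) \<bullet> (H *v (matpow M (Suc j) *v y)))"
    unfolding matpow_Suc_mult_vector by (rule skew_adjoint_inner[OF assms])
  then show ?case
    using Suc.IH[of "Suc j"] by (simp del: matpow.simps)
qed simp

lemma skew_adjoint_matpow_inner_parity:
  fixes H M :: "real^'n^'n"
  assumes "transpose H = H" and "transpose M ** H + H ** M = 0"
  shows "(matpow M i *v x) \<bullet> (H *v (matpow M j *v x))
    = (if even (i + j)
       then (-1) ^ (i + (i + j) div 2) * ((matpow M ((i + j) div 2) *v x) \<bullet>
              (H *v (matpow M ((i + j) div 2) *v x)))
       else 0)"
proof (cases "even (i + j)")
  case True
  then obtain k where k: "i + j = 2 * k"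
    by blast
  have "(matpow M k *v x) \<bullet> (H *v (matpow M k *v x))
      = (-1) ^ k * (x \<bullet> (H *v (matpow M (2 * k) *v x)))"
    using skew_adjoint_matpow_inner[OF assms(2), of k x k x] by (simp add: mult_2)
  then have "x \<bullet> (H *v (matpow M (2 * k) *v x))
      = (-1) ^ k * ((matpow M k *v x) \<bullet> (H *v (matpow M k *v x)))"
    by (simp flip: power_add)
  then show ?thesis
    using True by (simp add: skew_adjoint_matpow_inner[OF assms(2)] k power_add)
next
  case False
  define n where "n = i + j"
  have "x \<bullet> (H *v (matpow M n *v x)) = (matpow M n *v x) \<bullet> (H *v x)"
    by (rule inner_symmetric_matrix[OF assms(1)])
  also have "\<dots> = - (x \<bullet> (H *v (matpow M n *v x)))"
    using skew_adjoint_matpow_inner[OF assms(2), of n x 0 x] False by (simp add: n_def)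
  finally have "x \<bullet> (H *v (matpow M n *v x)) = 0"
    by simp
  then show ?thesis
    using False by (simp add: skew_adjoint_matpow_inner[OF assms(2)] n_def)
qed

subsection \<open>The energy identity\<close>

lemma bcoef_0: "bcoef a s 0 = (a 0)\<^sup>2"
  by (simp add: bcoef_def power2_eq_square)

lemma bcoef_top: "bcoef a s s = (a s)\<^sup>2"
  by (simp add: bcoef_def power2_eq_square)

lemma double_sum_eq_bcoef_sum:
  fixes a N :: "nat \<Rightarrow> real" and p :: "nat \<Rightarrow> nat \<Rightarrow> real"
  assumes p: "\<And>i j. p i j = (if even (i + j) then (-1) ^ (i + (i + j) div 2) * N ((i + j) div 2) else 0)"
  shows "(\<Sum>i=0..s. \<Sum>j=0..s. a i * a j * p i j) = (\<Sum>k=0..s. bcoef a s k * N k)"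
proof -
  define g where "g = (\<lambda>x. a (fst x) * a (snd x) * p (fst x) (snd x))"
  define S where "S = {0..s} \<times> {0..s}"
  have "(\<Sum>i=0..s. \<Sum>j=0..s. a i * a j * p i j) = (\<Sum>x\<in>S. g x)"
    unfolding S_def g_def by (simp add: sum.cartesian_product split_def)
  also have "\<dots> = (\<Sum>k=0..s. \<Sum>x\<in>{x\<in>S. (fst x + snd x) div 2 = k}. g x)"
    by (rule sum.group[symmetric]) (auto simp: S_def)
  also have "\<dots> = (\<Sum>k=0..s. bcoef a s k * N k)"
  proof (rule sum.cong[OF refl])
    fix k
    have "(\<Sum>x\<in>{x\<in>S. (fst x + snd x) div 2 = k}. g x) = (\<Sum>x\<in>{x\<in>S. fst x + snd x = 2 * k}. g x)"
      by (rule sum.mono_neutral_right) (auto simp: S_def g_def p)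
    also have "{x\<in>S. fst x + snd x = 2 * k} = (\<lambda>i. (i, 2 * k - i)) ` {2 * k - s..min (2 * k) s}"
      by (auto simp: S_def image_iff)
    also have "(\<Sum>x\<in>(\<lambda>i. (i, 2 * k - i)) ` {2 * k - s..min (2 * k) s}. g x)
        = (\<Sum>i=2 * k - s..min (2 * k) s. (-1) ^ (k + i) * a i * a (2 * k - i) * N k)"
      by (rule sum.reindex_cong[where l="\<lambda>i. (i, 2 * k - i)"]) (auto simp: inj_on_def g_def p add.commute)
    also have "\<dots> = bcoef a s k * N k"
      unfolding bcoef_def by (simp add: sum_distrib_right)
    finally show "(\<Sum>x\<in>{x\<in>S. (fst x + snd x) div 2 = k}. g x) = bcoef a s k * N k" .
  qed
  finally show ?thesis .
qed

lemma Hnorm_RKmat_squared: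
  fixes H L :: "real^'n^'n"
  assumes "spd H" and "transpose L ** H + H ** L = 0"
  shows "(Hnorm H (RKmat a s h L *v u))\<^sup>2
    = (\<Sum>k=0..s. bcoef a s k * (Hnorm H (matpow (h *\<^sub>R L) k *v u))\<^sup>2)"
proof -
  have symm: "transpose H = H"
    using assms(1) by (simp add: spd_def)
  define v where "v k = matpow (h *\<^sub>R L) k *v u" for k
  have "RKmat a s h L *v u = (\<Sum>k=0..s. a k *\<^sub>R v k)"
    unfolding RKmat_def v_def by (simp add: matrix_vector_mult_sum_left scaleR_matrix_vector_assoc)
  then have "(Hnorm H (RKmat a s h L *v u))\<^sup>2 = (\<Sum>i=0..s. \<Sum>j=0..s. a i * a j * (v j \<bullet> (H *v v i)))"
    by (simp add: Hnorm_squared[OF assms(1)] vec.sum matrix_vector_mult_scaleR inner_sum_left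
        inner_sum_right sum_distrib_left mult_ac)
  also have "\<dots> = (\<Sum>i=0..s. \<Sum>j=0..s. a i * a j * (v i \<bullet> (H *v v j)))"
    by (intro sum.cong refl) (simp add: inner_symmetric_matrix[OF symm])
  also have "\<dots> = (\<Sum>k=0..s. bcoef a s k * (v k \<bullet> (H *v v k)))"
    unfolding v_def
    by (rule double_sum_eq_bcoef_sum,
        rule skew_adjoint_matpow_inner_parity[OF symm skew_adjoint_scaleR[OF assms(2)]])
  finally show ?thesis
    by (simp add: Hnorm_squared[OF assms(1)] v_def)
qed

lemma Hnorm_scaled_step_squared_le:
  fixes H L :: "real^'n^'n"
  assumes "spd H" and "0 \<le> h" and "0 < b" and "h * Hopnorm H L \<le> sqrt (c / b)"
  shows "b * (Hnorm H ((h *\<^sub>R L) *v w))\<^sup>2 \<le> c * (Hnorm H w)\<^sup>2"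
proof -
  have "0 \<le> h * Hopnorm H L"
    using assms(2) Hopnorm_nonneg[OF assms(1)] by simp
  then have "(h * Hopnorm H L)\<^sup>2 \<le> c / b"
    using assms(4) by (metis power_mono real_sqrt_ge_0_iff real_sqrt_pow2 order_trans)
  have "Hnorm H ((h *\<^sub>R L) *v w) \<le> h * Hopnorm H L * Hnorm H w"
    using Hnorm_mult_le_Hopnorm[OF assms(1), of L w] assms(2)
    by (simp add: Hnorm_scaleR mult.assoc mult_left_mono flip: scaleR_matrix_vector_assoc)
  then have "(Hnorm H ((h *\<^sub>R L) *v w))\<^sup>2 \<le> (h * Hopnorm H L)\<^sup>2 * (Hnorm H w)\<^sup>2"
    using Hnorm_nonneg[OF assms(1)] by (metis power_mono power_mult_distrib)
  also have "\<dots> \<le> c / b * (Hnorm H w)\<^sup>2"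
    using \<open>(h * Hopnorm H L)\<^sup>2 \<le> c / b\<close> by (intro mult_right_mono) auto
  finally show ?thesis
    using assms(3) by (simp add: field_simps)
qed

theorem lemma1:
  fixes H L :: "real^'n^'n" and a :: "nat \<Rightarrow> real" and s :: nat and h :: real
  assumes "spd H"
    and "transpose L ** H + H ** L = 0"
    and "s \<ge> 1"
    and "a 0 = 1" and "a s \<noteq> 0" and "h > 0"
    and "\<forall>k. 1 \<le> k \<and> k \<le> s - 2 \<longrightarrow> bcoef a s k = 0"
    and "bcoef a s (s - 1) < 0"
    and "h * Hopnorm H L \<le> sqrt (- bcoef a s (s - 1) / bcoef a s s)"
  shows "\<forall>u. Hnorm H (RKmat a s h L *v u) \<le> Hnorm H u"
proof
  fix u :: "real^'n"
  define w where "w = matpow (h *\<^sub>R L) (s - 1) *v u"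
  have "s \<noteq> 1"
    using assms(8) by (auto simp: bcoef_0 assms(4))
  then have "2 \<le> s" and "matpow (h *\<^sub>R L) s *v u = (h *\<^sub>R L) *v w"
    using assms(3) matpow_Suc_mult_vector[of _ "s - 1"] by (auto simp: w_def)
  have "bcoef a s s * (Hnorm H ((h *\<^sub>R L) *v w))\<^sup>2 \<le> - bcoef a s (s - 1) * (Hnorm H w)\<^sup>2"
    using assms(1,5,6,9) by (intro Hnorm_scaled_step_squared_le) (auto simp: bcoef_top)
  moreover have "(Hnorm H (RKmat a s h L *v u))\<^sup>2 = (Hnorm H u)\<^sup>2
      + bcoef a s (s - 1) * (Hnorm H w)\<^sup>2 + bcoef a s s * (Hnorm H ((h *\<^sub>R L) *v w))\<^sup>2"
    using assms(7) \<open>2 \<le> s\<close> \<open>matpow (h *\<^sub>R L) s *v u = (h *\<^sub>R L) *v w\<close>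
    by (simp add: Hnorm_RKmat_squared[OF assms(1,2)] sum_atLeast0_atMost_sparse bcoef_0 assms(4) w_def)
  ultimately have "(Hnorm H (RKmat a s h L *v u))\<^sup>2 \<le> (Hnorm H u)\<^sup>2"
    by linarith
  then show "Hnorm H (RKmat a s h L *v u) \<le> Hnorm H u"
    using Hnorm_nonneg[OF assms(1)] by (rule power2_le_imp_le)
qed

end
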